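(* For every graph $G$ and every path $P$, $\pi^*(G\boxtimes P)\le 4\,\pi^*(G)$.
   Context: All graphs are finite and simple. A lazy walk in a graph $G$ is a sequence of vertices $v_1,\dots,v_m$ such that for each $i<m$, either $v_iv_{i+1}\in E(G)$ or $v_i=v_{i+1}$. For a colouring $\phi$ of $V(G)$, a lazy walk $v_1,\dots,v_{2t}$ is $\phi$-repetitive if $\phi(v_i)=\phi(v_{i+t})$ for each $i\in\{1,\dots,t\}$. A colouring $\phi$ is strongly nonrepetitive if for every $\phi$-repetitive lazy walk $v_1,\dots,v_{2t}$ there exists $i\in\{1,\dots,t\}$ with $v_i=v_{i+t}$. $\pi^*(G)$ denotes the minimum number of colours in a strongly nonrepetitive colouring of $G$. The strong product $A\boxtimes B$ has vertex set $V(A)\times V(B)$, with distinct $(v,x),(w,y)$ adjacent iff ($v=w$ and $xy\in E(B)$) or ($x=y$ and $vw\in E(A)$) or ($vw\in E(A)$ and $xy\in E(B)$). *)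

theory Defs
  imports Main
begin

definition graph :: "'a set \<Rightarrow> ('a \<Rightarrow> 'a \<Rightarrow> bool) \<Rightarrow> bool" where
  "graph V E \<longleftrightarrow> finite V \<and> (\<forall>x y. E x y \<longrightarrow> x \<in> V \<and> y \<in> V)
     \<and> (\<forall>x y. E x y \<longrightarrow> E y x) \<and> (\<forall>x. \<not> E x x)"

text \<open>Lazy walk v_1..v_m (as a list, 0-indexed).\<close>
definition lazy_walk :: "'a set \<Rightarrow> ('a \<Rightarrow> 'a \<Rightarrow> bool) \<Rightarrow> 'a list \<Rightarrow> bool" where
  "lazy_walk V E ws \<longleftrightarrow> set ws \<subseteq> V \<and>
     (\<forall>i. Suc i < length ws \<longrightarrow> E (ws ! i) (ws ! Suc i) \<or> ws ! i = ws ! Suc i)"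

definition strongly_nonrepetitive ::
  "'a set \<Rightarrow> ('a \<Rightarrow> 'a \<Rightarrow> bool) \<Rightarrow> ('a \<Rightarrow> 'c) \<Rightarrow> bool" where
  "strongly_nonrepetitive V E \<phi> \<longleftrightarrow>
     (\<forall>ws t. lazy_walk V E ws \<and> t \<ge> 1 \<and> length ws = 2 * t \<and>
        (\<forall>i<t. \<phi> (ws ! i) = \<phi> (ws ! (i + t)))
        \<longrightarrow> (\<exists>i<t. ws ! i = ws ! (i + t)))"

definition pi_star :: "'a set \<Rightarrow> ('a \<Rightarrow> 'a \<Rightarrow> bool) \<Rightarrow> nat" where
  "pi_star V E = (LEAST k. \<exists>\<phi> :: 'a \<Rightarrow> nat.
      \<phi> ` V \<subseteq> {..<k} \<and> strongly_nonrepetitive V E \<phi>)"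

definition strong_prod_V :: "'a set \<Rightarrow> 'b set \<Rightarrow> ('a \<times> 'b) set" where
  "strong_prod_V VA VB = VA \<times> VB"

definition strong_prod_E ::
  "('a \<Rightarrow> 'a \<Rightarrow> bool) \<Rightarrow> ('b \<Rightarrow> 'b \<Rightarrow> bool) \<Rightarrow> 'a \<times> 'b \<Rightarrow> 'a \<times> 'b \<Rightarrow> bool" where
  "strong_prod_E EA EB p q \<longleftrightarrow> p \<noteq> q \<and>
     (let (v, x) = p; (w, y) = q in
       (v = w \<and> EB x y) \<or> (x = y \<and> EA v w) \<or> (EA v w \<and> EB x y))"

definition is_path_graph :: "'a set \<Rightarrow> ('a \<Rightarrow> 'a \<Rightarrow> bool) \<Rightarrow> bool" where
  "is_path_graph V E \<longleftrightarrow> (\<exists>(n::nat) f. bij_betw f {..<n} V \<and>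
     (\<forall>i<n. \<forall>j<n. E (f i) (f j) \<longleftrightarrow> (i = j + 1 \<or> j = i + 1))
     \<and> (\<forall>x y. E x y \<longrightarrow> x \<in> V \<and> y \<in> V))"

end

theory Submission
  imports Defs
begin

text \<open>Colour a vertex (v, x) of the strong product of G and P by the pair (\<phi> v, \<psi> x), where
\<phi> is an optimal strongly nonrepetitive colouring of G and \<psi> is a 4-colouring of the path that is
square-free and separates vertices at distance at most 2; \<psi> is the square-free ternary Thue--Morse
word with a fourth colour inserted at every third position. For such a \<psi> every \<psi>-repetitive lazy
walk on the path has identical halves: the halves move in lockstep up to a translation or a
reflection, a translation yields a square in \<psi>, and a reflection forces the halves to meet.
Projecting a repetitive lazy walk of the product to G gives an index i at which the G-coordinates of
the two halves agree, and the P-coordinates agree at every index, in particular at i.\<close>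

section \<open>The Thue--Morse sequence\<close>

fun thue_morse :: "nat \<Rightarrow> bool" where
  "thue_morse 0 = False"
| "thue_morse (Suc n) = (thue_morse (Suc n div 2) \<noteq> odd (Suc n))"

lemma thue_morse_double [simp]: "thue_morse (2 * k) = thue_morse k"
  by (cases k) auto

lemma thue_morse_Suc_double [simp]: "thue_morse (Suc (2 * k)) = (\<not> thue_morse k)"
  by simp

declare thue_morse.simps(2) [simp del]

lemma thue_morse_even_Suc: "even x \<Longrightarrow> thue_morse (Suc x) \<noteq> thue_morse x"
  by (auto elim: evenE)

lemma thue_morse_half:
  assumes "x mod 2 = y mod 2" and "thue_morse x = thue_morse y"
  shows "thue_morse (x div 2) = thue_morse (y div 2)"
  using assms by (cases "even x") (auto elim!: evenE oddE simp: mod2_eq_if split: if_splits)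

lemma thue_morse_alternates_in_odd_overlap:
  assumes "odd l" and overlap: "\<And>j. j \<le> l \<Longrightarrow> thue_morse (a + j) = thue_morse (a + l + j)"
    and "a \<le> x" "x < a + l"
  shows "thue_morse (Suc x) \<noteq> thue_morse x"
proof (cases "even x")
  case True
  then show ?thesis by (rule thue_morse_even_Suc)
next
  case False
  have "thue_morse x = thue_morse (x + l)" "thue_morse (Suc x) = thue_morse (Suc x + l)"
    using overlap[of "x - a"] overlap[of "Suc x - a"] assms(3,4) by (simp_all add: ac_simps)
  moreover have "even (x + l)" using False \<open>odd l\<close> by simp
  ultimately show ?thesis using thue_morse_even_Suc[of "x + l"] by simp
qed

lemma thue_morse_overlap_free:
  "0 < l \<Longrightarrow> \<exists>j\<le>l. thue_morse (a + j) \<noteq> thue_morse (a + l + j)"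
proof (induction l arbitrary: a rule: less_induct)
  case (less l)
  show ?case
  proof (cases "even l")
    case True
    then obtain m where m: "l = 2 * m" by blast
    with less.prems have "0 < m" "m < l" by auto
    from less.IH[OF \<open>m < l\<close> \<open>0 < m\<close>, of "a div 2"] obtain j where j: "j \<le> m"
      "thue_morse (a div 2 + j) \<noteq> thue_morse (a div 2 + m + j)" by blast
    have "(a + 2 * j) div 2 = a div 2 + j" "(a + l + 2 * j) div 2 = a div 2 + m + j"
      "(a + 2 * j) mod 2 = (a + l + 2 * j) mod 2" using m by auto
    then have "thue_morse (a + 2 * j) \<noteq> thue_morse (a + l + 2 * j)"
      using j(2) thue_morse_half by metis
    then show ?thesis using j m by (intro exI[of _ "2 * j"]) auto
  next
    case False
    show ?thesis
    proof (rule ccontr)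
      assume "\<not> ?thesis"
      then have overlap: "\<And>j. j \<le> l \<Longrightarrow> thue_morse (a + j) = thue_morse (a + l + j)"
        by blast
      have "thue_morse (a + j) = (thue_morse a \<noteq> odd j)" if "j \<le> l" for j
        using that
      proof (induction j)
        case (Suc j)
        then show ?case
          using thue_morse_alternates_in_odd_overlap[OF False overlap, of "a + j"] by auto
      qed simp
      from this[of l] overlap[of 0] False show False by simp
    qed
  qed
qed

section \<open>Square-free words\<close>

definition square_free :: "(nat \<Rightarrow> 'c) \<Rightarrow> bool" where
  "square_free f \<longleftrightarrow> (\<forall>a l. 0 < l \<longrightarrow> (\<exists>j<l. f (a + j) \<noteq> f (a + l + j)))"

definition ternary_thue_morse :: "nat \<Rightarrow> nat" where
  "ternary_thue_morse n =
     (if thue_morse n = thue_morse (Suc n) then 1 else if thue_morse n then 0 else 2)"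

lemma ternary_thue_morse_less: "ternary_thue_morse n < 3"
  by (simp add: ternary_thue_morse_def)

lemma ternary_thue_morse_eqD:
  assumes "ternary_thue_morse x = ternary_thue_morse y"
  shows "(thue_morse (Suc x) = thue_morse (Suc y)) = (thue_morse x = thue_morse y)"
    and "thue_morse x \<noteq> thue_morse y \<Longrightarrow> thue_morse (Suc x) = thue_morse x"
  using assms by (auto simp: ternary_thue_morse_def split: if_splits)

lemma square_free_ternary_thue_morse: "square_free ternary_thue_morse"
  unfolding square_free_def
proof (intro allI impI)
  fix a l :: nat
  assume "0 < l"
  show "\<exists>j<l. ternary_thue_morse (a + j) \<noteq> ternary_thue_morse (a + l + j)"
  proof (rule ccontr)
    assume "\<not> ?thesis"
    then have square: "\<And>j. j < l \<Longrightarrow> ternary_thue_morse (a + j) = ternary_thue_morse (a + l + j)"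
      by blast
    show False
    proof (cases "thue_morse a = thue_morse (a + l)")
      case True
      have "thue_morse (a + j) = thue_morse (a + l + j)" if "j \<le> l" for j
        using that
      proof (induction j)
        case (Suc j)
        then show ?case using ternary_thue_morse_eqD(1)[OF square[of j]] by simp
      qed (use True in simp)
      with thue_morse_overlap_free[OF \<open>0 < l\<close>, of a] show False by blast
    next
      case False
      \<comment> \<open>the two blocks stay complementary, which forces the first one to be constant\<close>
      have "thue_morse (a + j) \<noteq> thue_morse (a + l + j) \<and> thue_morse (a + j) = thue_morse a"
        if "j \<le> l" for j
        using that
      proof (induction j)
        case (Suc j)
        then show ?case
          using ternary_thue_morse_eqD[OF square[of j]] by auto
      qed (use False in simp)
      from this[of l] False show False by simp
    qed
  qed
qed

lemma ternary_thue_morse_Suc_neq: "ternary_thue_morse (Suc n) \<noteq> ternary_thue_morse n"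
  using square_free_ternary_thue_morse[unfolded square_free_def, rule_format, of 1 n] by simp

section \<open>A square-free 4-colouring of the path\<close>

definition path_colour :: "nat \<Rightarrow> nat" where
  "path_colour n = (if n mod 3 = 2 then 3 else ternary_thue_morse (2 * (n div 3) + n mod 3))"

text \<open>The position of the c-th entry of path_colour that differs from 3.\<close>

definition non3_pos :: "nat \<Rightarrow> nat" where
  "non3_pos c = 3 * (c div 2) + c mod 2"

lemma path_colour_less: "path_colour n < 4"
  using ternary_thue_morse_less[of "2 * (n div 3) + n mod 3"] by (simp add: path_colour_def)

lemma path_colour_eq_3_iff: "path_colour n = 3 \<longleftrightarrow> n mod 3 = 2"
  using ternary_thue_morse_less[of "2 * (n div 3) + n mod 3"] by (auto simp: path_colour_def)

lemma path_colour_non3_pos: "path_colour (non3_pos c) = ternary_thue_morse c"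
  by (simp add: path_colour_def non3_pos_def ternary_thue_morse_def)

lemma non3_pos_add: "non3_pos (c + 2 * m) = non3_pos c + 3 * m"
  by (simp add: non3_pos_def)

lemma non3_pos_Suc: "non3_pos c < non3_pos (Suc c)"
  unfolding non3_pos_def by (cases "even c") (auto elim!: evenE oddE)

lemma non3_pos_mono: "c \<le> c' \<Longrightarrow> non3_pos c \<le> non3_pos c'"
  by (induction c' rule: dec_induct) (auto intro: order_trans less_imp_le[OF non3_pos_Suc])

lemma non3_pos_window:
  assumes "i < 2 * m"
  shows "a \<le> non3_pos (2 * (a div 3) + a mod 3 + i)"
    and "non3_pos (2 * (a div 3) + a mod 3 + i) < a + 3 * m"
proof -
  obtain q r where a: "a = 3 * q + r" "r < 3" and qr: "q = a div 3" "r = a mod 3" by auto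
  obtain m' where m': "m = Suc m'" using assms by (cases m) auto
  have r: "r = 0 \<or> r = 1 \<or> r = 2" using a by arith
  have "a \<le> non3_pos (2 * q + r)" using r a by (auto simp: non3_pos_def)
  also have "\<dots> \<le> non3_pos (2 * q + r + i)" by (rule non3_pos_mono) simp
  finally show "a \<le> non3_pos (2 * (a div 3) + a mod 3 + i)" using qr by simp
  have "non3_pos (2 * q + r + i) \<le> non3_pos ((r + 1) + 2 * (q + m'))"
    using assms m' by (intro non3_pos_mono) simp
  also have "\<dots> = non3_pos (r + 1) + 3 * (q + m')" by (rule non3_pos_add)
  also have "\<dots> < a + 3 * m" using r a m' by (auto simp: non3_pos_def)
  finally show "non3_pos (2 * (a div 3) + a mod 3 + i) < a + 3 * m" using qr by simp
qed

lemma path_colour_Suc_neq: "path_colour (Suc n) \<noteq> path_colour n"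
proof (cases "n mod 3 = 0")
  case True
  then obtain q where n: "n = 3 * q" by auto
  have "Suc (3 * q) div 3 = q" "Suc (3 * q) mod 3 = 1" by simp_all
  then have "path_colour (Suc n) = ternary_thue_morse (Suc (2 * q))"
    by (simp add: n path_colour_def)
  moreover have "path_colour n = ternary_thue_morse (2 * q)" by (simp add: n path_colour_def)
  ultimately show ?thesis using ternary_thue_morse_Suc_neq by simp
next
  case False
  then have "(Suc n mod 3 = 2) \<noteq> (n mod 3 = 2)" by presburger
  then show ?thesis using path_colour_eq_3_iff by metis
qed

lemma path_colour_Suc_Suc_neq: "path_colour (Suc (Suc n)) \<noteq> path_colour n"
proof (cases "n mod 3 = 1")
  case True
  have "\<exists>q. n = Suc (3 * q)" using True by presburger
  then obtain q where n: "n = Suc (3 * q)" by blast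
  have "Suc (3 * q) div 3 = q" "Suc (3 * q) mod 3 = 1" "Suc (Suc (Suc (3 * q))) div 3 = Suc q"
    "Suc (Suc (Suc (3 * q))) mod 3 = 0" by simp_all
  then have "path_colour n = ternary_thue_morse (Suc (2 * q))"
    "path_colour (Suc (Suc n)) = ternary_thue_morse (Suc (Suc (2 * q)))"
    by (simp_all add: n path_colour_def)
  then show ?thesis using ternary_thue_morse_Suc_neq by simp
next
  case False
  then have "(Suc (Suc n) mod 3 = 2) \<noteq> (n mod 3 = 2)" by presburger
  then show ?thesis using path_colour_eq_3_iff by metis
qed

lemma path_colour_eq_near:
  assumes "path_colour x = path_colour y" and "\<bar>int x - int y\<bar> \<le> 2"
  shows "x = y"
  using assms
proof (induction x y rule: linorder_wlog)
  case (le x y)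
  then have "y = x \<or> y = Suc x \<or> y = Suc (Suc x)" by arith
  then show ?case using le(2) path_colour_Suc_neq[of x] path_colour_Suc_Suc_neq[of x] by fastforce
qed (simp add: abs_minus_commute eq_commute)

lemma square_free_path_colour: "square_free path_colour"
  unfolding square_free_def
proof (intro allI impI)
  fix a l :: nat
  assume "0 < l"
  show "\<exists>j<l. path_colour (a + j) \<noteq> path_colour (a + l + j)"
  proof (cases "3 dvd l")
    case False
    show ?thesis
    proof (cases "l = 1")
      case True
      then show ?thesis using path_colour_Suc_neq[of a] by (intro exI[of _ 0]) simp
    next
      case False
      with \<open>0 < l\<close> \<open>\<not> 3 dvd l\<close> have "\<exists>j<l. ((a + j) mod 3 = 2) \<noteq> ((a + l + j) mod 3 = 2)"
        by presburger
      then show ?thesis using path_colour_eq_3_iff by metis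
    qed
  next
    case True
    then obtain m where m: "l = 3 * m" by blast
    with \<open>0 < l\<close> have "0 < m" by simp
    define b where "b = 2 * (a div 3) + a mod 3"
    have "0 < 2 * m" using \<open>0 < m\<close> by simp
    then obtain i where i: "i < 2 * m" "ternary_thue_morse (b + i) \<noteq> ternary_thue_morse (b + 2 * m + i)"
      using square_free_ternary_thue_morse unfolding square_free_def by blast
    define x where "x = non3_pos (b + i)"
    have x: "a \<le> x" "x < a + l" using non3_pos_window[OF i(1), of a] by (simp_all add: x_def b_def m)
    have "x + l = non3_pos (b + 2 * m + i)"
      using non3_pos_add[of "b + i" m] by (simp add: x_def m ac_simps)
    then have "path_colour x \<noteq> path_colour (x + l)"
      using i(2) by (simp add: x_def path_colour_non3_pos)
    moreover have "a + (x - a) = x" "a + l + (x - a) = x + l" "x - a < l" using x by simp_all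
    ultimately show ?thesis by metis
  qed
qed

section \<open>Repetitive lazy walks on the path\<close>

locale repetitive_lazy_walk =
  fixes \<psi> :: "nat \<Rightarrow> 'c" and P :: "nat \<Rightarrow> nat" and t :: nat
  assumes square_free: "square_free \<psi>"
    and eq_if_near: "\<And>x y. \<psi> x = \<psi> y \<Longrightarrow> \<bar>int x - int y\<bar> \<le> 2 \<Longrightarrow> x = y"
    and step: "\<And>i. Suc i < 2 * t \<Longrightarrow> \<bar>int (P (Suc i)) - int (P i)\<bar> \<le> 1"
    and repetitive: "\<And>i. i < t \<Longrightarrow> \<psi> (P i) = \<psi> (P (i + t))"
    and t_pos: "0 < t"
begin

definition p :: "nat \<Rightarrow> int" where "p i = int (P i)"
definition q :: "nat \<Rightarrow> int" where "q i = int (P (i + t))"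

lemma p_step: "Suc i < t \<Longrightarrow> \<bar>p (Suc i) - p i\<bar> \<le> 1"
  using step[of i] by (simp add: p_def)

lemma q_step: "Suc i < t \<Longrightarrow> \<bar>q (Suc i) - q i\<bar> \<le> 1"
  using step[of "i + t"] by (simp add: q_def)

lemma q_0_near_p_last: "\<bar>q 0 - p (t - 1)\<bar> \<le> 1"
  using step[of "t - 1"] t_pos by (simp add: p_def q_def)

lemma q_nonneg: "0 \<le> q i"
  by (simp add: q_def)

lemma p_eq_q_if_near: "i < t \<Longrightarrow> \<bar>p i - q i\<bar> \<le> 2 \<Longrightarrow> p i = q i"
  using eq_if_near repetitive by (simp add: p_def q_def)

lemma p_intermediate_value:
  assumes "i \<le> j" "j < t" "min (p i) (p j) \<le> y" "y \<le> max (p i) (p j)"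
  shows "\<exists>l. i \<le> l \<and> l \<le> j \<and> p l = y"
proof (cases "p i \<le> p j")
  case True
  then show ?thesis
    using nat_intermed_int_val[of i j p y] assms p_step by auto
next
  case False
  then have "\<exists>l\<ge>i. l \<le> j \<and> - p l = - y"
    using nat_intermed_int_val[of i j "\<lambda>l. - p l" "- y"] assms p_step
    by (auto simp: abs_minus_commute)
  then show ?thesis by auto
qed

lemma p_eq_q_iff_Suc: "Suc i < t \<Longrightarrow> p i = q i \<longleftrightarrow> p (Suc i) = q (Suc i)"
  using p_eq_q_if_near[of i] p_eq_q_if_near[of "Suc i"] p_step[of i] q_step[of i] by auto

lemma halves_eq_or_neq: "(\<forall>i<t. p i = q i) \<or> (\<forall>i<t. p i \<noteq> q i)"
proof -
  have "p i = q i \<longleftrightarrow> p 0 = q 0" if "i < t" for i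
    using that by (induction i) (auto simp: p_eq_q_iff_Suc)
  then show ?thesis by blast
qed

lemma q_eq_if_p_eq:
  assumes "i < t" "j < t" "p i = p j" "\<bar>q i - q j\<bar> \<le> 2"
  shows "q i = q j"
  using assms eq_if_near repetitive[of i] repetitive[of j] by (simp add: p_def q_def)

lemma q_neq_if_p_near:
  assumes "i < t" "j < t" "p i \<noteq> p j" "\<bar>p i - p j\<bar> \<le> 2"
  shows "q i \<noteq> q j"
  using assms eq_if_near repetitive[of i] repetitive[of j] by (auto simp: p_def q_def)

lemma p_stays_iff_q_stays: "Suc k < t \<Longrightarrow> p (Suc k) = p k \<longleftrightarrow> q (Suc k) = q k"
  using q_eq_if_p_eq[of "Suc k" k] q_neq_if_p_near[of "Suc k" k] p_step[of k] q_step[of k] by auto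

lemma p_visits_neighbour:
  assumes "i \<le> k" "k < t" "p i \<noteq> p k"
  shows "\<exists>j\<le>k. p j = p k - 1 \<or> p j = p k + 1"
proof (cases "p i < p k")
  case True
  then show ?thesis using p_intermediate_value[OF assms(1,2), of "p k - 1"] by (auto simp: min_def max_def)
next
  case False
  then show ?thesis using assms(3) p_intermediate_value[OF assms(1,2), of "p k + 1"]
    by (auto simp: min_def max_def)
qed

lemma affine_step:
  assumes k: "Suc k < t" and e: "e = 1 \<or> e = -1" and affine: "\<forall>i\<le>k. q i = c + e * p i"
  shows "\<exists>c e. (e = 1 \<or> e = -1) \<and> (\<forall>i\<le>Suc k. q i = c + e * p i)"
proof -
  define x x' y y' where "x = p k" "x' = p (Suc k)" "y = q k" "y' = q (Suc k)"
  have y: "y = c + e * x" using affine by (simp add: x_x'_y_y'_def)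
  have dx: "\<bar>x' - x\<bar> \<le> 1" and dy: "\<bar>y' - y\<bar> \<le> 1"
    using p_step[OF k] q_step[OF k] by (simp_all add: x_x'_y_y'_def)
  have stay: "x' = x \<longleftrightarrow> y' = y" using p_stays_iff_q_stays[OF k] by (simp add: x_x'_y_y'_def)
  have keep: ?thesis if "y' = c + e * x'"
  proof -
    have "\<forall>i\<le>Suc k. q i = c + e * p i"
      using affine that by (auto simp: le_Suc_eq x_x'_y_y'_def)
    then show ?thesis using e by blast
  qed
  show ?thesis
  proof (cases "x' = x")
    case True
    then show ?thesis using keep stay y by simp
  next
    case moved: False
    have x': "x' = x - 1 \<or> x' = x + 1" and y': "y' = y - 1 \<or> y' = y + 1"
      using moved stay dx dy by arith+
    show ?thesis
    proof (cases "\<forall>i\<le>k. p i = x")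
      case unmoved: True
      \<comment> \<open>the walk has not moved before, so the orientation may be chosen afresh\<close>
      define e' where "e' = (y' - y) * (x' - x)"
      have e': "e' = 1 \<or> e' = -1" "y' = y + e' * (x' - x)"
        using x' y' by (auto simp: e'_def)
      have "q i = (y - e' * x) + e' * p i" if "i \<le> Suc k" for i
      proof (cases "i = Suc k")
        case True
        then show ?thesis using e'(2) by (simp add: x_x'_y_y'_def algebra_simps)
      next
        case False
        then have "p i = x" "q i = c + e * x" using \<open>i \<le> Suc k\<close> unmoved affine by auto
        then show ?thesis using y by simp
      qed
      then show ?thesis using e'(1) by blast
    next
      case False
      then obtain i where "i \<le> k" "p i \<noteq> p k" by (auto simp: x_x'_y_y'_def)
      with k obtain j where j: "j \<le> k" "p j = x - 1 \<or> p j = x + 1"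
        using p_visits_neighbour[of i k] by (auto simp: x_x'_y_y'_def)
      have qj: "q j = c + e * p j" using affine j(1) by simp
      show ?thesis
      proof (cases "p j = x'")
        case True
        \<comment> \<open>x' was visited before, so the second half revisits its image\<close>
        have "q j - y' = e * (x' - x) - (y' - y)" using qj True y by (simp add: algebra_simps)
        moreover have "\<bar>e * (x' - x)\<bar> \<le> 1" using e dx by (auto simp: abs_mult)
        ultimately have "\<bar>q j - y'\<bar> \<le> 2" using dy by arith
        then have "q j = y'"
          using q_eq_if_p_eq[of j "Suc k"] True j(1) k by (simp add: x_x'_y_y'_def)
        then show ?thesis using keep qj True by simp
      next
        case False
        \<comment> \<open>the other neighbour of x was visited, so the second half avoids its image\<close>
        then have "q j \<noteq> y'"
          using q_neq_if_p_near[of j "Suc k"] j x' k by (auto simp: x_x'_y_y'_def)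
        then have "y' = c + e * x'" using qj j(2) False x' y' y e by auto
        then show ?thesis by (rule keep)
      qed
    qed
  qed
qed

lemma affine_relation: "\<exists>c e. (e = 1 \<or> e = -1) \<and> (\<forall>i<t. q i = c + e * p i)"
proof -
  have "\<exists>c e. (e = 1 \<or> e = -1) \<and> (\<forall>i\<le>k. q i = c + e * p i)" if "k < t" for k
    using that
  proof (induction k)
    case 0
    then show ?case by (intro exI[of _ "q 0 - p 0"] exI[of _ 1]) auto
  next
    case (Suc k)
    then obtain c e where "e = 1 \<or> e = -1" "\<forall>i\<le>k. q i = c + e * p i" by auto
    with Suc.prems show ?case by (rule affine_step)
  qed
  from this[of "t - 1"] t_pos show ?thesis by (auto simp: less_Suc_eq_le[symmetric])
qed

lemma p_intermediate_value_ends: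
  assumes "p 0 \<le> y \<and> y \<le> p (t - 1) \<or> p (t - 1) \<le> y \<and> y \<le> p 0"
  shows "\<exists>i<t. p i = y"
proof -
  have "min (p 0) (p (t - 1)) \<le> y" "y \<le> max (p 0) (p (t - 1))" using assms by auto
  then obtain i where "i \<le> t - 1" "p i = y" using p_intermediate_value[of 0 "t - 1"] t_pos by auto
  moreover have "i < t" using \<open>i \<le> t - 1\<close> t_pos by linarith
  ultimately show ?thesis by blast
qed

lemma no_reflection:
  assumes neq: "\<forall>i<t. p i \<noteq> q i" and reflect: "\<forall>i<t. q i = c - p i"
  shows False
proof -
  have c: "c = p 0 + q 0" using reflect t_pos by auto
  have last: "q 0 - 1 \<le> p (t - 1)" "p (t - 1) \<le> q 0 + 1" using q_0_near_p_last by arith+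
  \<comment> \<open>the first half crosses the midpoint c / 2 between p 0 and q 0\<close>
  obtain y where y: "p 0 \<le> y \<and> y \<le> p (t - 1) \<or> p (t - 1) \<le> y \<and> y \<le> p 0" "\<bar>2 * y - c\<bar> \<le> 2"
  proof (cases "p 0 < q 0")
    case True
    have "2 * (c div 2) \<le> c" "c \<le> 2 * (c div 2) + 1" by linarith+
    then have "p 0 \<le> c div 2" "c div 2 \<le> p (t - 1)" "\<bar>2 * (c div 2) - c\<bar> \<le> 2"
      using True c last by linarith+
    then show thesis by (intro that[of "c div 2"]) simp_all
  next
    case False
    then have "q 0 < p 0" using neq t_pos by force
    have "2 * ((c + 1) div 2) \<le> c + 1" "c + 1 \<le> 2 * ((c + 1) div 2) + 1" by linarith+
    then have "p (t - 1) \<le> (c + 1) div 2" "(c + 1) div 2 \<le> p 0" "\<bar>2 * ((c + 1) div 2) - c\<bar> \<le> 2"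
      using \<open>q 0 < p 0\<close> c last by linarith+
    then show thesis by (intro that[of "(c + 1) div 2"]) simp_all
  qed
  then obtain i where i: "i < t" "p i = y" using p_intermediate_value_ends by blast
  then have "\<bar>p i - q i\<bar> \<le> 2" using reflect y(2) by auto
  then show False using p_eq_q_if_near neq i(1) by blast
qed

lemma no_translation:
  assumes neq: "\<forall>i<t. p i \<noteq> q i" and shift: "\<forall>i<t. q i = c + p i"
  shows False
proof -
  have c: "c = q 0 - p 0" using shift t_pos by auto
  have last: "q 0 - 1 \<le> p (t - 1)" "p (t - 1) \<le> q 0 + 1" using q_0_near_p_last by arith+
  have "c \<noteq> 0" using neq t_pos c by auto
  then consider "0 < c" | "c < 0" by linarith
  then show False
  proof cases
    case 1
    \<comment> \<open>the first half sweeps p 0, ..., p 0 + c - 1, and the second half repeats it shifted by c\<close>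
    then obtain j where j: "j < nat c" "\<psi> (P 0 + j) \<noteq> \<psi> (P 0 + nat c + j)"
      using square_free unfolding square_free_def by (metis zero_less_nat_eq)
    have "p 0 \<le> p 0 + int j" "p 0 + int j \<le> p (t - 1)" using j(1) c last by linarith+
    then obtain i where i: "i < t" "p i = p 0 + int j" using p_intermediate_value_ends by blast
    have "int (P i) = int (P 0 + j)" "int (P (i + t)) = int (P 0 + nat c + j)"
      using i shift 1 by (simp_all add: p_def q_def)
    then show False using repetitive[OF i(1)] j(2) by (metis of_nat_eq_iff)
  next
    case 2
    have "p (t - 1) \<le> p 0 + c + 1" "p 0 + c + 1 \<le> p 0" using 2 c last by linarith+
    then obtain i0 where i0: "i0 < t" "p i0 = p 0 + c + 1" using p_intermediate_value_ends by blast
    define a where "a = nat (p 0 + 2 * c + 1)"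
    have a: "int a = p 0 + 2 * c + 1" using q_nonneg[of i0] shift i0 by (simp add: a_def)
    obtain j where j: "j < nat (- c)" "\<psi> (a + j) \<noteq> \<psi> (a + nat (- c) + j)"
      using square_free 2 unfolding square_free_def by (metis neg_0_less_iff_less zero_less_nat_eq)
    have "p (t - 1) \<le> p 0 + c + 1 + int j" "p 0 + c + 1 + int j \<le> p 0" using j(1) 2 c last by linarith+
    then obtain i where i: "i < t" "p i = p 0 + c + 1 + int j" using p_intermediate_value_ends by blast
    have "int (P i) = int (a + nat (- c) + j)" "int (P (i + t)) = int (a + j)"
      using i shift a 2 by (simp_all add: p_def q_def)
    then show False using repetitive[OF i(1)] j(2) by (metis of_nat_eq_iff)
  qed
qed

theorem halves_eq: "i < t \<Longrightarrow> P i = P (i + t)"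
proof -
  assume "i < t"
  consider "\<forall>i<t. p i = q i" | "\<forall>i<t. p i \<noteq> q i" using halves_eq_or_neq by blast
  then show "P i = P (i + t)"
  proof cases
    case 1
    then show ?thesis using \<open>i < t\<close> by (simp add: p_def q_def)
  next
    case 2
    obtain c e where "e = 1 \<or> e = -1" "\<forall>i<t. q i = c + e * p i" using affine_relation by blast
    then show ?thesis using no_translation[OF 2, of c] no_reflection[OF 2, of c] by auto
  qed
qed

end

section \<open>Strong products\<close>

definition rigid_colouring :: "'a set \<Rightarrow> ('a \<Rightarrow> 'a \<Rightarrow> bool) \<Rightarrow> ('a \<Rightarrow> 'c) \<Rightarrow> bool" where
  "rigid_colouring V E \<rho> \<longleftrightarrow>
     (\<forall>ws t. lazy_walk V E ws \<and> 1 \<le> t \<and> length ws = 2 * t \<and>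
        (\<forall>i<t. \<rho> (ws ! i) = \<rho> (ws ! (i + t)))
        \<longrightarrow> (\<forall>i<t. ws ! i = ws ! (i + t)))"

lemma rigid_colouringD:
  assumes "rigid_colouring V E \<rho>" "lazy_walk V E ws" "1 \<le> t" "length ws = 2 * t"
    "\<forall>i<t. \<rho> (ws ! i) = \<rho> (ws ! (i + t))"
  shows "\<forall>i<t. ws ! i = ws ! (i + t)"
  using assms unfolding rigid_colouring_def by blast

lemma strongly_nonrepetitiveD:
  assumes "strongly_nonrepetitive V E \<phi>" "lazy_walk V E ws" "1 \<le> t" "length ws = 2 * t"
    "\<forall>i<t. \<phi> (ws ! i) = \<phi> (ws ! (i + t))"
  shows "\<exists>i<t. ws ! i = ws ! (i + t)"
  using assms unfolding strongly_nonrepetitive_def by blast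

lemma rigid_colouring_path:
  assumes bij: "bij_betw f {..<n} V"
    and edges: "\<forall>i<n. \<forall>j<n. E (f i) (f j) \<longleftrightarrow> (i = j + 1 \<or> j = i + 1)"
  shows "rigid_colouring V E (path_colour \<circ> inv_into {..<n} f)"
  unfolding rigid_colouring_def
proof (intro allI impI)
  fix ws :: "'a list" and t i :: nat
  define idx where "idx = inv_into {..<n} f"
  have idx: "idx v < n" "f (idx v) = v" if "v \<in> V" for v
    using that bij by (auto simp: idx_def bij_betw_def f_inv_into_f inv_into_into)
  assume ws: "lazy_walk V E ws \<and> 1 \<le> t \<and> length ws = 2 * t \<and>
    (\<forall>i<t. (path_colour \<circ> inv_into {..<n} f) (ws ! i) = (path_colour \<circ> inv_into {..<n} f) (ws ! (i + t)))"
  then have in_V: "ws ! i \<in> V" if "i < 2 * t" for i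
    using that nth_mem[of i ws] by (auto simp: lazy_walk_def)
  define P where "P i = idx (ws ! i)" for i
  interpret repetitive_lazy_walk path_colour P t
  proof
    show "square_free path_colour" by (rule square_free_path_colour)
    show "path_colour x = path_colour y \<Longrightarrow> \<bar>int x - int y\<bar> \<le> 2 \<Longrightarrow> x = y" for x y
      by (rule path_colour_eq_near)
    show "\<bar>int (P (Suc i)) - int (P i)\<bar> \<le> 1" if "Suc i < 2 * t" for i
    proof -
      have V: "ws ! i \<in> V" "ws ! Suc i \<in> V" using in_V that by simp_all
      have "E (f (P i)) (f (P (Suc i))) \<or> P i = P (Suc i)"
        using ws that idx(2)[OF V(1)] idx(2)[OF V(2)] by (auto simp: lazy_walk_def P_def)
      then have "P i = P (Suc i) + 1 \<or> P (Suc i) = P i + 1 \<or> P i = P (Suc i)"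
        using edges idx(1)[OF V(1)] idx(1)[OF V(2)] by (auto simp: P_def)
      then show ?thesis by auto
    qed
    show "path_colour (P i) = path_colour (P (i + t))" if "i < t" for i
      using ws that by (simp add: P_def idx_def)
    show "0 < t" using ws by simp
  qed
  assume "i < t"
  then have "idx (ws ! i) = idx (ws ! (i + t))" using halves_eq by (simp add: P_def)
  then show "ws ! i = ws ! (i + t)" using idx(2) in_V \<open>i < t\<close> by (metis add_less_cancel_right mult_2 trans_less_add1)
qed

lemma strong_prod_E_projections:
  "strong_prod_E EG EH u v \<Longrightarrow>
     (fst u = fst v \<or> EG (fst u) (fst v)) \<and> (snd u = snd v \<or> EH (snd u) (snd v))"
  by (cases u; cases v) (auto simp: strong_prod_E_def)

lemma lazy_walk_strong_prod_projections:
  assumes "lazy_walk (VG \<times> VH) (strong_prod_E EG EH) ws"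
  shows "lazy_walk VG EG (map fst ws)" and "lazy_walk VH EH (map snd ws)"
proof -
  have "set (map fst ws) \<subseteq> VG" "set (map snd ws) \<subseteq> VH"
    using assms by (auto simp: lazy_walk_def)
  moreover have
    "EG (map fst ws ! i) (map fst ws ! Suc i) \<or> map fst ws ! i = map fst ws ! Suc i"
    "EH (map snd ws ! i) (map snd ws ! Suc i) \<or> map snd ws ! i = map snd ws ! Suc i"
    if "Suc i < length ws" for i
    using assms that strong_prod_E_projections[of EG EH "ws ! i" "ws ! Suc i"]
    unfolding lazy_walk_def by auto
  ultimately show "lazy_walk VG EG (map fst ws)" "lazy_walk VH EH (map snd ws)"
    unfolding lazy_walk_def by simp_all
qed

lemma strongly_nonrepetitive_strong_prod:
  assumes "strongly_nonrepetitive VG EG \<phi>" and "rigid_colouring VH EH \<rho>"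
  shows "strongly_nonrepetitive (VG \<times> VH) (strong_prod_E EG EH) (\<lambda>(v, b). (\<phi> v, \<rho> b))"
  unfolding strongly_nonrepetitive_def
proof (intro allI impI)
  fix ws t
  assume ws: "lazy_walk (VG \<times> VH) (strong_prod_E EG EH) ws \<and> 1 \<le> t \<and> length ws = 2 * t \<and>
    (\<forall>i<t. (\<lambda>(v, b). (\<phi> v, \<rho> b)) (ws ! i) = (\<lambda>(v, b). (\<phi> v, \<rho> b)) (ws ! (i + t)))"
  then have rep: "\<phi> (fst (ws ! i)) = \<phi> (fst (ws ! (i + t))) \<and> \<rho> (snd (ws ! i)) = \<rho> (snd (ws ! (i + t)))"
    if "i < t" for i
    using that by (cases "ws ! i"; cases "ws ! (i + t)") auto
  have len: "1 \<le> t" "length (map fst ws) = 2 * t" "length (map snd ws) = 2 * t" using ws by auto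
  have "\<forall>i<t. \<phi> (map fst ws ! i) = \<phi> (map fst ws ! (i + t))"
    "\<forall>i<t. \<rho> (map snd ws ! i) = \<rho> (map snd ws ! (i + t))"
    using rep ws by simp_all
  then obtain i where i: "i < t" "map fst ws ! i = map fst ws ! (i + t)"
    and "\<forall>i<t. map snd ws ! i = map snd ws ! (i + t)"
    using strongly_nonrepetitiveD[OF assms(1)] rigid_colouringD[OF assms(2)]
      lazy_walk_strong_prod_projections[of VG VH EG EH ws] ws len by meson
  then have "fst (ws ! i) = fst (ws ! (i + t))" "snd (ws ! i) = snd (ws ! (i + t))"
    using ws by simp_all
  then show "\<exists>i<t. ws ! i = ws ! (i + t)" using i(1) by (auto simp: prod_eq_iff)
qed

lemma strongly_nonrepetitive_refinement:
  assumes "strongly_nonrepetitive V E \<phi>"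
    and "\<And>x y. x \<in> V \<Longrightarrow> y \<in> V \<Longrightarrow> \<chi> x = \<chi> y \<Longrightarrow> \<phi> x = \<phi> y"
  shows "strongly_nonrepetitive V E \<chi>"
  unfolding strongly_nonrepetitive_def
proof (intro allI impI)
  fix ws t
  assume ws: "lazy_walk V E ws \<and> t \<ge> 1 \<and> length ws = 2 * t \<and> (\<forall>i<t. \<chi> (ws ! i) = \<chi> (ws ! (i + t)))"
  then have "ws ! i \<in> V" if "i < 2 * t" for i
    using that nth_mem[of i ws] by (auto simp: lazy_walk_def)
  then have "\<forall>i<t. \<phi> (ws ! i) = \<phi> (ws ! (i + t))" using ws assms(2) by simp
  then show "\<exists>i<t. ws ! i = ws ! (i + t)" using strongly_nonrepetitiveD[OF assms(1)] ws by blast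
qed

lemma strongly_nonrepetitive_inj:
  assumes "inj_on \<phi> V"
  shows "strongly_nonrepetitive V E \<phi>"
  unfolding strongly_nonrepetitive_def
proof (intro allI impI)
  fix ws :: "'a list" and t :: nat
  assume ws: "lazy_walk V E ws \<and> 1 \<le> t \<and> length ws = 2 * t \<and> (\<forall>i<t. \<phi> (ws ! i) = \<phi> (ws ! (i + t)))"
  then have "ws ! 0 \<in> V" "ws ! t \<in> V" "\<phi> (ws ! 0) = \<phi> (ws ! t)"
    using nth_mem[of 0 ws] nth_mem[of t ws] by (auto simp: lazy_walk_def)
  then have "ws ! 0 = ws ! (0 + t)" using assms by (simp add: inj_on_eq_iff)
  then show "\<exists>i<t. ws ! i = ws ! (i + t)" using ws by (intro exI[of _ 0]) auto
qed

lemma pi_star_le: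
  assumes "\<phi> ` V \<subseteq> {..<k}" and "strongly_nonrepetitive V E \<phi>"
  shows "pi_star V E \<le> k"
  unfolding pi_star_def using assms by (intro Least_le) blast

lemma pi_star_colouring_exists:
  assumes "finite V"
  obtains \<phi> :: "'a \<Rightarrow> nat" where "\<phi> ` V \<subseteq> {..<pi_star V E}" "strongly_nonrepetitive V E \<phi>"
proof -
  obtain g :: "'a \<Rightarrow> nat" and n where "g ` V = {i. i < n}" "inj_on g V"
    using finite_imp_inj_to_nat_seg[OF assms] by blast
  then have "g ` V \<subseteq> {..<n}" "strongly_nonrepetitive V E g"
    using strongly_nonrepetitive_inj by auto
  then have "\<exists>k. \<exists>\<phi> :: 'a \<Rightarrow> nat. \<phi> ` V \<subseteq> {..<k} \<and> strongly_nonrepetitive V E \<phi>" by blast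
  then have "\<exists>\<phi> :: 'a \<Rightarrow> nat. \<phi> ` V \<subseteq> {..<pi_star V E} \<and> strongly_nonrepetitive V E \<phi>"
    unfolding pi_star_def by (rule LeastI_ex)
  then show thesis using that by blast
qed


lemma strongly_nonrepetitive_strong_prod_encoded:
  fixes \<phi> :: "'a \<Rightarrow> nat" and \<rho> :: "'b \<Rightarrow> nat"
  assumes "strongly_nonrepetitive VG EG \<phi>" and "rigid_colouring VH EH \<rho>" and "\<And>b. \<rho> b < m"
  shows "strongly_nonrepetitive (VG \<times> VH) (strong_prod_E EG EH) (\<lambda>(v, b). m * \<phi> v + \<rho> b)"
proof (rule strongly_nonrepetitive_refinement)
  show "strongly_nonrepetitive (VG \<times> VH) (strong_prod_E EG EH) (\<lambda>(v, b). (\<phi> v, \<rho> b))"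
    by (rule strongly_nonrepetitive_strong_prod[OF assms(1,2)])
  show "(\<lambda>(v, b). (\<phi> v, \<rho> b)) x = (\<lambda>(v, b). (\<phi> v, \<rho> b)) y"
    if "(\<lambda>(v, b). m * \<phi> v + \<rho> b) x = (\<lambda>(v, b). m * \<phi> v + \<rho> b) y" for x y
  proof -
    obtain v b w c where xy: "x = (v, b)" "y = (w, c)" by fastforce
    have "m * \<phi> v + \<rho> b = m * \<phi> w + \<rho> c" using that xy by simp
    then have "(m * \<phi> v + \<rho> b) div m = (m * \<phi> w + \<rho> c) div m"
      "(m * \<phi> v + \<rho> b) mod m = (m * \<phi> w + \<rho> c) mod m" by simp_all
    moreover have "\<rho> b < m" "\<rho> c < m" by (rule assms(3))+
    ultimately show ?thesis using xy by simp
  qed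
qed

lemma pi_star_strong_prod_le:
  fixes \<rho> :: "'b \<Rightarrow> nat"
  assumes "finite VG" and "rigid_colouring VH EH \<rho>" and "\<And>b. \<rho> b < m"
  shows "pi_star (VG \<times> VH) (strong_prod_E EG EH) \<le> m * pi_star VG EG"
proof -
  obtain \<phi> where \<phi>: "\<phi> ` VG \<subseteq> {..<pi_star VG EG}" "strongly_nonrepetitive VG EG \<phi>"
    using pi_star_colouring_exists[OF assms(1)] by blast
  have "m * \<phi> v + \<rho> b < m * pi_star VG EG" if "v \<in> VG" for v b
  proof -
    have "Suc (\<phi> v) \<le> pi_star VG EG" using \<phi>(1) that by auto
    then have "m * Suc (\<phi> v) \<le> m * pi_star VG EG" by (rule mult_le_mono2)
    then show ?thesis using assms(3)[of b] by simp
  qed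
  then have "(\<lambda>(v, b). m * \<phi> v + \<rho> b) ` (VG \<times> VH) \<subseteq> {..<m * pi_star VG EG}" by auto
  then show ?thesis
    using strongly_nonrepetitive_strong_prod_encoded[OF \<phi>(2) assms(2,3)] by (rule pi_star_le)
qed

theorem mainTheorem7:
  fixes VG :: "'a set" and EG :: "'a \<Rightarrow> 'a \<Rightarrow> bool"
    and VP :: "'b set" and EP :: "'b \<Rightarrow> 'b \<Rightarrow> bool"
  assumes "graph VG EG" and "graph VP EP" and "is_path_graph VP EP"
  shows "pi_star (strong_prod_V VG VP) (strong_prod_E EG EP) \<le> 4 * pi_star VG EG"
proof -
  obtain n :: nat and f where "bij_betw f {..<n} VP"
    "\<forall>i<n. \<forall>j<n. EP (f i) (f j) \<longleftrightarrow> (i = j + 1 \<or> j = i + 1)"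
    using assms(3) unfolding is_path_graph_def by blast
  then have "rigid_colouring VP EP (path_colour \<circ> inv_into {..<n} f)"
    by (rule rigid_colouring_path)
  moreover have "finite VG" using assms(1) by (simp add: graph_def)
  ultimately show ?thesis
    unfolding strong_prod_V_def using path_colour_less by (intro pi_star_strong_prod_le) auto
qed

end
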